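(* Let $a,n\in\mathbb{N}$, let $k_1,\ldots,k_n\in\mathbb{N}$, let $f_1,\ldots,f_n$, $g_1,\ldots,g_n$, $h_1,\ldots,h_n$ be arbitrary arithmetic functions, and let $\omega$ be a completely multiplicative function. Then $$U_{\omega}^{(a)}(k_1,\ldots,k_n)=\sum_{d_1|k_1,\ldots,d_n|k_n}\omega(M)^a\Bigl(\prod_{i=1}^n f_i(d_i)\,g_i\Bigl(\frac{k_i}{d_i}\Bigr)\Bigr)\sum_{\ell=1}^{L^a}\omega(\ell)\prod_{i=1}^n h_i\Bigl(\Bigl(\frac{M}{d_i}\Bigr)^a\ell\Bigr),$$ where in each summand $M=\operatorname{lcm}(d_1,\ldots,d_n)$ and $L=K/M$. If in addition $h_1,\ldots,h_n$ are completely multiplicative, then $$U_{\omega}^{(a)}(k_1,\ldots,k_n)=\sum_{d_1|k_1,\ldots,d_n|k_n}\omega(M)^a\Bigl(\prod_{i=1}^n f_i(d_i)\,g_i\Bigl(\frac{k_i}{d_i}\Bigr)h_i\Bigl(\frac{M}{d_i}\Bigr)^a\Bigr)\sum_{\ell=1}^{L^a}\omega(\ell)\prod_{i=1}^n h_i(\ell).$$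
   Context: An arithmetic function is a map $\mathbb{N}\to\mathbb{C}$. A function $\omega$ is completely multiplicative if $\omega(1)=1$ and $\omega(mn)=\omega(m)\omega(n)$ for all $m,n\in\mathbb{N}$. For $a\in\mathbb{N}$ and arithmetic functions $f,g,h$, the generalized Anderson–Apostol sum is $s^{(a)}_{f,g,h}(k,j)=\sum_{d|k,\ d^a|j} f(d)\,g(k/d)\,h(j/d^a)$ for $k,j\in\mathbb{N}$. Given $k_1,\ldots,k_n\in\mathbb{N}$, put $K=\operatorname{lcm}(k_1,\ldots,k_n)$ and $U_{\omega}^{(a)}(k_1,\ldots,k_n)=\sum_{j=1}^{K^a}\omega(j)\prod_{i=1}^n s^{(a)}_{f_i,g_i,h_i}(k_i,j)$. *)

theory Defs
  imports Complex_Main "HOL-Library.FuncSet"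
begin

text \<open>Arithmetic functions are maps on the positive integers; we model them as
  functions nat => complex whose value at 0 is irrelevant.\<close>

definition compl_mult :: "(nat \<Rightarrow> complex) \<Rightarrow> bool" where
  "compl_mult w \<longleftrightarrow> w 1 = 1 \<and> (\<forall>m n. 0 < m \<longrightarrow> 0 < n \<longrightarrow> w (m * n) = w m * w n)"

definition AA_sum :: "nat \<Rightarrow> (nat \<Rightarrow> complex) \<Rightarrow> (nat \<Rightarrow> complex) \<Rightarrow> (nat \<Rightarrow> complex)
    \<Rightarrow> nat \<Rightarrow> nat \<Rightarrow> complex" where
  "AA_sum a f g h k j = (\<Sum>d\<in>{d. d dvd k \<and> d ^ a dvd j}. f d * g (k div d) * h (j div d ^ a))"

definition U_sum :: "nat \<Rightarrow> nat \<Rightarrow> (nat \<Rightarrow> complex) \<Rightarrow> (nat \<Rightarrow> nat \<Rightarrow> complex)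
    \<Rightarrow> (nat \<Rightarrow> nat \<Rightarrow> complex) \<Rightarrow> (nat \<Rightarrow> nat \<Rightarrow> complex) \<Rightarrow> (nat \<Rightarrow> nat) \<Rightarrow> complex" where
  "U_sum a n \<omega> f g h k =
     (\<Sum>j = 1..(Lcm (k ` {1..n})) ^ a. \<omega> j * (\<Prod>i = 1..n. AA_sum a (f i) (g i) (h i) (k i) j))"

end

theory Submission
  imports Defs
begin

text \<open>Expanding each factor of the product in \<open>U\<close> and multiplying out turns \<open>U\<close> into a sum over
  divisor tuples \<open>(d\<^sub>1,\<dots>,d\<^sub>n)\<close> of sums over those \<open>j \<le> K\<^sup>a\<close> with \<open>d\<^sub>i\<^sup>a | j\<close> for all \<open>i\<close>,
  i.e. with \<open>M\<^sup>a | j\<close> where \<open>M = lcm(d\<^sub>1,\<dots>,d\<^sub>n)\<close>. Writing \<open>j = M\<^sup>a \<ell>\<close> with \<open>1 \<le> \<ell> \<le> (K/M)\<^sup>a\<close>,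
  complete multiplicativity of \<open>\<omega>\<close> splits off \<open>\<omega>(M)\<^sup>a\<close>, and \<open>j / d\<^sub>i\<^sup>a = (M/d\<^sub>i)\<^sup>a \<ell>\<close>.
  If the \<open>h\<^sub>i\<close> are completely multiplicative as well, \<open>h\<^sub>i((M/d\<^sub>i)\<^sup>a \<ell>)\<close> factors further.\<close>

lemma compl_mult_mult: "compl_mult w \<Longrightarrow> 0 < x \<Longrightarrow> 0 < y \<Longrightarrow> w (x * y) = w x * w y"
  by (simp add: compl_mult_def)

lemma compl_mult_power: "compl_mult w \<Longrightarrow> 0 < x \<Longrightarrow> w (x ^ a) = w x ^ a"
  by (induction a) (simp_all add: compl_mult_def)

lemma lcm_power_nat: "lcm ((x::nat) ^ a) (y ^ a) = lcm x y ^ a"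
  by (simp add: lcm_nat_def div_power power_mult_distrib)

lemma Lcm_image_power_nat:
  "finite I \<Longrightarrow> Lcm ((\<lambda>i. (d i :: nat) ^ a) ` I) = Lcm (d ` I) ^ a"
  by (induction I rule: finite_induct) (simp_all add: lcm_power_nat)

lemma Lcm_image_power_dvd_iff_nat:
  "finite I \<Longrightarrow> Lcm (d ` I) ^ a dvd (j::nat) \<longleftrightarrow> (\<forall>i\<in>I. d i ^ a dvd j)"
  by (simp flip: Lcm_image_power_nat add: Lcm_dvd_iff)

lemma Lcm_image_pos_nat:
  "finite I \<Longrightarrow> (\<And>i. i \<in> I \<Longrightarrow> 0 < (d i :: nat)) \<Longrightarrow> 0 < Lcm (d ` I)"
  by (metis Lcm_0_iff finite_imageI gr0I image_iff)

lemma sum_multiples_reindex: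
  fixes G :: "nat \<Rightarrow> 'a::comm_monoid_add"
  assumes "0 < c"
  shows "(\<Sum>j = 1..c * N. if c dvd j then G j else 0) = (\<Sum>l = 1..N. G (c * l))"
proof -
  have "{j \<in> {1..c * N}. c dvd j} = (\<lambda>l. c * l) ` {1..N}"
    using assms by (auto elim!: dvdE simp: image_iff)
  moreover have "inj_on (\<lambda>l. c * l) {1..N}"
    using assms by (simp add: inj_on_def)
  ultimately show ?thesis
    by (simp add: sum.inter_filter [symmetric] sum.reindex)
qed

lemma AA_sum_conv_sum_divisors:
  assumes "0 < k"
  shows "AA_sum a f g h k j =
    (\<Sum>e | e dvd k. if e ^ a dvd j then f e * g (k div e) * h (j div e ^ a) else 0)"
proof -
  have "{e. e dvd k \<and> e ^ a dvd j} = {e \<in> {e. e dvd k}. e ^ a dvd j}"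
    by blast
  then show ?thesis
    unfolding AA_sum_def using assms by (simp only:) (rule sum.inter_filter, simp add: finite_divisors_nat)
qed

lemma prod_AA_sum_eq_sum_divisor_tuples:
  assumes "finite I" and "\<And>i. i \<in> I \<Longrightarrow> 0 < k i"
  shows "(\<Prod>i\<in>I. AA_sum a (f i) (g i) (h i) (k i) j) =
    (\<Sum>d\<in>PiE I (\<lambda>i. {e. e dvd k i}).
       if Lcm (d ` I) ^ a dvd j
       then \<Prod>i\<in>I. f i (d i) * g i (k i div d i) * h i (j div d i ^ a) else 0)"
proof -
  have "(\<Prod>i\<in>I. AA_sum a (f i) (g i) (h i) (k i) j) =
      (\<Prod>i\<in>I. \<Sum>e | e dvd k i.
         if e ^ a dvd j then f i e * g i (k i div e) * h i (j div e ^ a) else 0)"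
    using assms(2) by (simp add: AA_sum_conv_sum_divisors)
  also have "\<dots> = (\<Sum>d\<in>PiE I (\<lambda>i. {e. e dvd k i}). \<Prod>i\<in>I.
      if d i ^ a dvd j then f i (d i) * g i (k i div d i) * h i (j div d i ^ a) else 0)"
    using assms by (simp add: prod_sum_PiE finite_divisors_nat)
  also have "\<dots> = (\<Sum>d\<in>PiE I (\<lambda>i. {e. e dvd k i}).
       if Lcm (d ` I) ^ a dvd j
       then \<Prod>i\<in>I. f i (d i) * g i (k i div d i) * h i (j div d i ^ a) else 0)"
    using assms(1) by (intro sum.cong refl) (auto simp: Lcm_image_power_dvd_iff_nat)
  finally show ?thesis .
qed

lemma sum_over_multiples_of_Lcm_power:
  fixes d :: "nat \<Rightarrow> nat" and \<omega> :: "nat \<Rightarrow> complex"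
  assumes "compl_mult \<omega>" and "finite I" and "\<And>i. i \<in> I \<Longrightarrow> 0 < d i"
    and "Lcm (d ` I) dvd K"
  defines "M \<equiv> Lcm (d ` I)"
  shows "(\<Sum>j = 1..K ^ a. if M ^ a dvd j
           then \<omega> j * (\<Prod>i\<in>I. f i (d i) * g i (k i div d i) * h i (j div d i ^ a)) else 0) =
         \<omega> M ^ a * (\<Prod>i\<in>I. f i (d i) * g i (k i div d i)) *
         (\<Sum>l = 1..(K div M) ^ a. \<omega> l * (\<Prod>i\<in>I. h i ((M div d i) ^ a * l)))"
proof -
  have M_pos: "0 < M"
    unfolding M_def using assms(2,3) by (rule Lcm_image_pos_nat)
  have K_eq: "K ^ a = M ^ a * (K div M) ^ a"
    using assms(4) by (simp add: M_def power_mult_distrib [symmetric])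
  have quotient: "M ^ a * l div d i ^ a = (M div d i) ^ a * l" if "i \<in> I" for i l
  proof -
    have "d i dvd M"
      using that by (simp add: M_def dvd_Lcm)
    then obtain e where "M = d i * e" ..
    then show ?thesis
      using assms(3) [OF that] by (simp add: power_mult_distrib)
  qed
  have "(\<Sum>j = 1..K ^ a. if M ^ a dvd j
           then \<omega> j * (\<Prod>i\<in>I. f i (d i) * g i (k i div d i) * h i (j div d i ^ a)) else 0) =
        (\<Sum>l = 1..(K div M) ^ a. \<omega> (M ^ a * l) *
           (\<Prod>i\<in>I. f i (d i) * g i (k i div d i) * h i (M ^ a * l div d i ^ a)))"
    unfolding K_eq using M_pos by (intro sum_multiples_reindex) simp
  also have "\<dots> = (\<Sum>l = 1..(K div M) ^ a. \<omega> (M ^ a * l) *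
           (\<Prod>i\<in>I. f i (d i) * g i (k i div d i) * h i ((M div d i) ^ a * l)))"
    by (simp add: quotient cong: prod.cong)
  also have "\<dots> = (\<Sum>l = 1..(K div M) ^ a. \<omega> M ^ a * (\<Prod>i\<in>I. f i (d i) * g i (k i div d i)) *
                    (\<omega> l * (\<Prod>i\<in>I. h i ((M div d i) ^ a * l))))"
    using assms(1) M_pos
    by (intro sum.cong refl) (simp add: compl_mult_mult compl_mult_power prod.distrib mult_ac)
  finally show ?thesis
    by (simp add: sum_distrib_left)
qed

lemma U_sum_eq_sum_divisor_tuples:
  assumes "compl_mult \<omega>" and "\<forall>i\<in>{1..n}. 0 < k i"
  shows "U_sum a n \<omega> f g h k =
      (\<Sum>d\<in>PiE {1..n} (\<lambda>i. {e. e dvd k i}).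
         \<omega> (Lcm (d ` {1..n})) ^ a *
         (\<Prod>i = 1..n. f i (d i) * g i (k i div d i)) *
         (\<Sum>l = 1..(Lcm (k ` {1..n}) div Lcm (d ` {1..n})) ^ a.
            \<omega> l * (\<Prod>i = 1..n. h i ((Lcm (d ` {1..n}) div d i) ^ a * l))))"
proof -
  define I where "I = {1..n}"
  define D where "D = PiE I (\<lambda>i. {e. e dvd k i})"
  define K where "K = Lcm (k ` I)"
  define P where "P d j = (\<Prod>i\<in>I. f i (d i) * g i (k i div d i) * h i (j div d i ^ a))" for d j
  have I_finite: "finite I" and k_pos: "\<And>i. i \<in> I \<Longrightarrow> 0 < k i"
    using assms(2) by (simp_all add: I_def)
  have "U_sum a n \<omega> f g h k =
      (\<Sum>j = 1..K ^ a. \<Sum>d\<in>D. if Lcm (d ` I) ^ a dvd j then \<omega> j * P d j else 0)"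
    unfolding U_sum_def I_def [symmetric] K_def [symmetric] D_def P_def
    using I_finite k_pos
    by (simp add: prod_AA_sum_eq_sum_divisor_tuples sum_distrib_left if_distrib cong: if_cong)
  also have "\<dots> = (\<Sum>d\<in>D. \<Sum>j = 1..K ^ a. if Lcm (d ` I) ^ a dvd j then \<omega> j * P d j else 0)"
    by (rule sum.swap)
  also have "\<dots> = (\<Sum>d\<in>D. \<omega> (Lcm (d ` I)) ^ a * (\<Prod>i\<in>I. f i (d i) * g i (k i div d i)) *
         (\<Sum>l = 1..(K div Lcm (d ` I)) ^ a. \<omega> l * (\<Prod>i\<in>I. h i ((Lcm (d ` I) div d i) ^ a * l))))"
  proof (intro sum.cong refl)
    fix d assume "d \<in> D"
    then have divisors: "d i dvd k i" if "i \<in> I" for i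
      using that by (auto simp: D_def)
    have "0 < d i" if "i \<in> I" for i
      using divisors [OF that] k_pos [OF that] by (simp add: dvd_pos_nat)
    moreover have "Lcm (d ` I) dvd K"
      unfolding K_def by (auto intro!: Lcm_least dvd_trans [OF divisors] simp: dvd_Lcm)
    ultimately show "(\<Sum>j = 1..K ^ a. if Lcm (d ` I) ^ a dvd j then \<omega> j * P d j else 0) =
        \<omega> (Lcm (d ` I)) ^ a * (\<Prod>i\<in>I. f i (d i) * g i (k i div d i)) *
        (\<Sum>l = 1..(K div Lcm (d ` I)) ^ a. \<omega> l * (\<Prod>i\<in>I. h i ((Lcm (d ` I) div d i) ^ a * l)))"
      unfolding P_def by (rule sum_over_multiples_of_Lcm_power [OF assms(1) I_finite])
  qed
  finally show ?thesis
    by (simp add: I_def D_def K_def)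
qed

lemma U_sum_eq_sum_divisor_tuples_compl_mult:
  assumes "compl_mult \<omega>" and "\<forall>i\<in>{1..n}. 0 < k i"
    and "\<forall>i\<in>{1..n}. compl_mult (h i)"
  shows "U_sum a n \<omega> f g h k =
      (\<Sum>d\<in>PiE {1..n} (\<lambda>i. {e. e dvd k i}).
         \<omega> (Lcm (d ` {1..n})) ^ a *
         (\<Prod>i = 1..n. f i (d i) * g i (k i div d i) * h i (Lcm (d ` {1..n}) div d i) ^ a) *
         (\<Sum>l = 1..(Lcm (k ` {1..n}) div Lcm (d ` {1..n})) ^ a.
            \<omega> l * (\<Prod>i = 1..n. h i l)))"
  unfolding U_sum_eq_sum_divisor_tuples [OF assms(1,2)]
proof (intro sum.cong refl)
  fix d assume d: "d \<in> PiE {1..n} (\<lambda>i. {e. e dvd k i})"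
  define M where "M = Lcm (d ` {1..n})"
  have d_pos: "0 < d i" if "i \<in> {1..n}" for i
    using that assms(2) PiE_mem [OF d that] by (auto intro: dvd_pos_nat)
  then have "0 < M"
    unfolding M_def by (intro Lcm_image_pos_nat) simp_all
  moreover have "d i dvd M" if "i \<in> {1..n}" for i
    using that by (simp add: M_def dvd_Lcm)
  ultimately have quotient_pos: "0 < M div d i" if "i \<in> {1..n}" for i
    using that d_pos by (simp add: div_greater_zero_iff dvd_imp_le)
  have h_split: "h i ((M div d i) ^ a * l) = h i (M div d i) ^ a * h i l"
    if "i \<in> {1..n}" and "0 < l" for i l
    using assms(3) that quotient_pos [OF that(1)] by (simp add: compl_mult_mult compl_mult_power)
  have "(\<Sum>l = 1..(Lcm (k ` {1..n}) div M) ^ a. \<omega> l * (\<Prod>i = 1..n. h i ((M div d i) ^ a * l))) =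
      (\<Sum>l = 1..(Lcm (k ` {1..n}) div M) ^ a.
         (\<Prod>i = 1..n. h i (M div d i) ^ a) * (\<omega> l * (\<Prod>i = 1..n. h i l)))"
  proof (intro sum.cong refl)
    fix l :: nat assume "l \<in> {1..(Lcm (k ` {1..n}) div M) ^ a}"
    then have "(\<Prod>i = 1..n. h i ((M div d i) ^ a * l)) =
        (\<Prod>i = 1..n. h i (M div d i) ^ a) * (\<Prod>i = 1..n. h i l)"
      unfolding prod.distrib [symmetric] by (intro prod.cong refl h_split) auto
    then show "\<omega> l * (\<Prod>i = 1..n. h i ((M div d i) ^ a * l)) =
        (\<Prod>i = 1..n. h i (M div d i) ^ a) * (\<omega> l * (\<Prod>i = 1..n. h i l))"
      by (simp add: mult_ac)
  qed
  then show "\<omega> M ^ a * (\<Prod>i = 1..n. f i (d i) * g i (k i div d i)) *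
      (\<Sum>l = 1..(Lcm (k ` {1..n}) div M) ^ a. \<omega> l * (\<Prod>i = 1..n. h i ((M div d i) ^ a * l))) =
      \<omega> M ^ a * (\<Prod>i = 1..n. f i (d i) * g i (k i div d i) * h i (M div d i) ^ a) *
      (\<Sum>l = 1..(Lcm (k ` {1..n}) div M) ^ a. \<omega> l * (\<Prod>i = 1..n. h i l))"
    by (simp add: sum_distrib_left prod.distrib mult_ac)
qed

theorem theorem1:
  fixes a n :: nat and k :: "nat \<Rightarrow> nat"
    and f g h :: "nat \<Rightarrow> nat \<Rightarrow> complex" and \<omega> :: "nat \<Rightarrow> complex"
  assumes "a \<ge> 1" and "n \<ge> 1"
    and "\<And>i. i \<in> {1..n} \<Longrightarrow> k i \<ge> 1"
    and "compl_mult \<omega>"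
  shows "U_sum a n \<omega> f g h k =
      (\<Sum>d\<in>(PiE {1..n} (\<lambda>i. {e. e dvd k i})).
         \<omega> (Lcm (d ` {1..n})) ^ a *
         (\<Prod>i = 1..n. f i (d i) * g i (k i div d i)) *
         (\<Sum>l = 1..(Lcm (k ` {1..n}) div Lcm (d ` {1..n})) ^ a.
            \<omega> l * (\<Prod>i = 1..n. h i ((Lcm (d ` {1..n}) div d i) ^ a * l))))
    \<and> ((\<forall>i\<in>{1..n}. compl_mult (h i)) \<longrightarrow>
      U_sum a n \<omega> f g h k =
      (\<Sum>d\<in>(PiE {1..n} (\<lambda>i. {e. e dvd k i})).
         \<omega> (Lcm (d ` {1..n})) ^ a *
         (\<Prod>i = 1..n. f i (d i) * g i (k i div d i) * h i (Lcm (d ` {1..n}) div d i) ^ a) *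
         (\<Sum>l = 1..(Lcm (k ` {1..n}) div Lcm (d ` {1..n})) ^ a.
            \<omega> l * (\<Prod>i = 1..n. h i l))))"
proof -
  have k_pos: "\<forall>i\<in>{1..n}. 0 < k i"
    using assms(3) by fastforce
  show ?thesis
    using U_sum_eq_sum_divisor_tuples [OF assms(4) k_pos]
      U_sum_eq_sum_divisor_tuples_compl_mult [OF assms(4) k_pos]
    by blast
qed

end
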